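(* For every $\gamma>0$ and every $E>0$ there exists a density operator $\varrho$ with $0<\operatorname{tr}[\varrho H]\le E+1$ such that $$\left\|\widetilde\varrho_{-}-\frac{{\cal N}_{-}(\gamma)[\varrho]}{\operatorname{tr}\big[{\cal N}_{-}(\gamma)[\varrho]\big]}\right\|_1\ \ge\ \sqrt{\frac{E}{E+1}},$$ and, likewise, for every $\gamma>0$ and $E>0$ there exists a density operator $\varrho$ with $0<\operatorname{tr}[\varrho H]\le E+1$ such that the same inequality holds with $\widetilde\varrho_{-},{\cal N}_{-}(\gamma)$ replaced by $\widetilde\varrho_{+},{\cal N}_{+}(\gamma)$.
   Context: ${\cal H}$ is a separable Hilbert space with orthonormal (Fock) basis $\{|n\rangle\}_{n=0}^{\infty}$; $a=\sum_{n\ge1}\sqrt{n}\,|n-1\rangle\langle n|$, $a^{\dagger}=\sum_{n\ge0}\sqrt{n+1}\,|n+1\rangle\langle n|$, $H=a^{\dagger}a$. For a density operator $\varrho$, $\operatorname{tr}[\varrho H^k]=\sum_n n^k\langle n|\varrho|n\rangle$. Ideal outputs: $\widetilde\varrho_{-}=a\varrho a^{\dagger}/\operatorname{tr}[a\varrho a^{\dagger}]$, $\widetilde\varrho_{+}=a^{\dagger}\varrho a/\operatorname{tr}[a^{\dagger}\varrho a]$ (defined for $0<\operatorname{tr}[\varrho H]<\infty$). For $\gamma>0$: ${\cal N}_{-}(\gamma)[\varrho]=(e^{2\gamma}-1)\,a e^{-\gamma H}\varrho e^{-\gamma H}a^{\dagger}$, ${\cal N}_{+}(\gamma)[\varrho]=(e^{2\gamma}-1)\,e^{-\gamma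 H}a^{\dagger}\varrho a e^{-\gamma H}$. $\|X\|_1=\operatorname{tr}\sqrt{X^{\dagger}X}$. *)

theory Defs
  imports "HOL-Analysis.Analysis"
begin

text \<open>Operators on the Fock space are represented by their (infinite) matrices
  in the Fock basis: X m n = <m|X|n>.\<close>

type_synonym fmat = "nat \<Rightarrow> nat \<Rightarrow> complex"

definition supp_vec :: "(nat \<Rightarrow> complex) \<Rightarrow> nat set" where
  "supp_vec x = {i. x i \<noteq> 0}"

definition mmul :: "fmat \<Rightarrow> fmat \<Rightarrow> fmat" where
  "mmul A B = (\<lambda>i j. \<Sum>\<^sub>\<infinity>k. A i k * B k j)"

definition adj :: "fmat \<Rightarrow> fmat" where
  "adj A = (\<lambda>i j. cnj (A j i))"

definition mscale :: "complex \<Rightarrow> fmat \<Rightarrow> fmat" where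
  "mscale c A = (\<lambda>i j. c * A i j)"

definition mtrace :: "fmat \<Rightarrow> complex" where
  "mtrace A = (\<Sum>\<^sub>\<infinity>n. A n n)"

definition ann :: fmat where
  "ann = (\<lambda>m n. if n = Suc m then complex_of_real (sqrt (real n)) else 0)"

definition cre :: fmat where
  "cre = (\<lambda>m n. if m = Suc n then complex_of_real (sqrt (real m)) else 0)"

text \<open>exp(-gamma H) with H = a^dagger a = diag(0,1,2,...)\<close>
definition expH :: "real \<Rightarrow> fmat" where
  "expH g = (\<lambda>m n. if m = n then complex_of_real (exp (- g * real n)) else 0)"

definition qform :: "fmat \<Rightarrow> (nat \<Rightarrow> complex) \<Rightarrow> complex" where
  "qform S x = (\<Sum>i\<in>supp_vec x. \<Sum>j\<in>supp_vec x. cnj (x i) * S i j * x j)"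

definition psd :: "fmat \<Rightarrow> bool" where
  "psd S \<longleftrightarrow> (\<forall>i j. S j i = cnj (S i j)) \<and>
     (\<forall>x. finite (supp_vec x) \<longrightarrow> 0 \<le> Re (qform S x))"

text \<open>matrix of a bounded operator on l^2\<close>
definition bounded_mat :: "fmat \<Rightarrow> bool" where
  "bounded_mat X \<longleftrightarrow> (\<exists>C. \<forall>x I. finite (supp_vec x) \<longrightarrow> finite I \<longrightarrow>
      (\<Sum>i\<in>I. (cmod (\<Sum>j\<in>supp_vec x. X i j * x j))\<^sup>2) \<le> C * (\<Sum>j\<in>supp_vec x. (cmod (x j))\<^sup>2))"

text \<open>|X| = sqrt(X^dagger X): the unique bounded positive square root\<close>
definition mabs :: "fmat \<Rightarrow> fmat" where
  "mabs X = (THE S. bounded_mat S \<and> psd S \<and> mmul S S = mmul (adj X) X)"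

definition trace_norm :: "fmat \<Rightarrow> real" where
  "trace_norm X = (\<Sum>\<^sub>\<infinity>n. Re (mabs X n n))"

definition density :: "fmat \<Rightarrow> bool" where
  "density \<rho> \<longleftrightarrow> psd \<rho> \<and> (\<lambda>n. \<rho> n n) summable_on UNIV \<and> mtrace \<rho> = 1"

text \<open>tr[rho H] = sum_n n <n|rho|n>\<close>
definition energy_finite :: "fmat \<Rightarrow> bool" where
  "energy_finite \<rho> \<longleftrightarrow> (\<lambda>n. real n * Re (\<rho> n n)) summable_on UNIV"

definition energy :: "fmat \<Rightarrow> real" where
  "energy \<rho> = (\<Sum>\<^sub>\<infinity>n. real n * Re (\<rho> n n))"

definition normalize :: "fmat \<Rightarrow> fmat" where
  "normalize X = mscale (1 / mtrace X) X"

definition ideal_minus :: "fmat \<Rightarrow> fmat" where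
  "ideal_minus \<rho> = normalize (mmul (mmul ann \<rho>) cre)"

definition ideal_plus :: "fmat \<Rightarrow> fmat" where
  "ideal_plus \<rho> = normalize (mmul (mmul cre \<rho>) ann)"

definition Nminus :: "real \<Rightarrow> fmat \<Rightarrow> fmat" where
  "Nminus g \<rho> = mscale (complex_of_real (exp (2 * g) - 1))
     (mmul (mmul (mmul (mmul ann (expH g)) \<rho>) (expH g)) cre)"

definition Nplus :: "real \<Rightarrow> fmat \<Rightarrow> fmat" where
  "Nplus g \<rho> = mscale (complex_of_real (exp (2 * g) - 1))
     (mmul (mmul (mmul (mmul (expH g) cre) \<rho>) ann) (expH g))"

end

theory Submission
  imports Defs
begin

text \<open>Both bounds are attained by states diagonal in the Fock basis. With \<open>\<rho>\<close> supported
  on \<open>{0, 1, q + 1}\<close> (resp. \<open>{0, q}\<close>) and suitable weights, the ideal output is the uniform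
  mixture of two Fock states \<open>|p\<rangle>\<close> and \<open>|p + q\<rangle>\<close>, whereas the damping \<open>e\<^sup>-\<^sup>\<gamma>\<^sup>H\<close> weights
  them in the ratio \<open>1 : exp (-2 \<gamma> q)\<close>. The difference of the normalized outputs is diagonal
  with entries \<open>\<plusminus> tanh (\<gamma> q) / 2\<close>; its absolute value is identified through the uniqueness
  of bounded positive square roots, so its trace norm is \<open>tanh (\<gamma> q)\<close>. This tends to 1 as
  \<open>q \<rightarrow> \<infinity>\<close>, while the energy of \<open>\<rho>\<close> stays at most 1.\<close>

definition diag_mat :: "(nat \<Rightarrow> real) \<Rightarrow> fmat" where
  "diag_mat d = (\<lambda>i j. if i = j then complex_of_real (d i) else 0)"

definition two_point :: "nat \<Rightarrow> nat \<Rightarrow> real \<Rightarrow> real \<Rightarrow> nat \<Rightarrow> real" where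
  "two_point p q u v = (\<lambda>i. if i = p then u else if i = q then v else 0)"

lemma
  fixes f :: "nat \<Rightarrow> 'b::{comm_monoid_add, t2_space}"
  assumes "finite F" "\<And>k. k \<notin> F \<Longrightarrow> f k = 0"
  shows infsum_finite_support: "infsum f UNIV = sum f F"
    and summable_on_finite_support: "f summable_on UNIV"
proof -
  show "infsum f UNIV = sum f F"
    using infsum_cong_neutral[of F UNIV f f] assms by auto
  show "f summable_on UNIV"
    using summable_on_cong_neutral[of F UNIV f f] assms by auto
qed

lemma infsum_single_support:
  fixes f :: "nat \<Rightarrow> 'b::{comm_monoid_add, t2_space}"
  assumes "\<And>k. k \<noteq> m \<Longrightarrow> f k = 0"
  shows "infsum f UNIV = f m"
  using infsum_finite_support[of "{m}" f] assms by auto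

subsection \<open>Matrix elements of products with the ladder operators\<close>

lemma mmul_ann_left:
  "mmul ann X = (\<lambda>i j. complex_of_real (sqrt (real (Suc i))) * X (Suc i) j)"
  unfolding mmul_def ann_def
  apply (intro ext)
  subgoal for i j by (subst infsum_single_support[where m = "Suc i"]) auto
  done

lemma mmul_cre_right:
  "mmul X cre = (\<lambda>i j. X i (Suc j) * complex_of_real (sqrt (real (Suc j))))"
  unfolding mmul_def cre_def
  apply (intro ext)
  subgoal for i j by (subst infsum_single_support[where m = "Suc j"]) auto
  done

lemma mmul_cre_left:
  "mmul cre X = (\<lambda>i j. if i = 0 then 0 else complex_of_real (sqrt (real i)) * X (i - 1) j)"
  unfolding mmul_def cre_def
  apply (intro ext)
  subgoal for i j by (subst infsum_single_support[where m = "i - 1"]) auto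
  done

lemma mmul_ann_right:
  "mmul X ann = (\<lambda>i j. if j = 0 then 0 else X i (j - 1) * complex_of_real (sqrt (real j)))"
  unfolding mmul_def ann_def
  apply (intro ext)
  subgoal for i j by (subst infsum_single_support[where m = "j - 1"]) auto
  done

lemma mmul_expH_left:
  "mmul (expH g) X = (\<lambda>i j. complex_of_real (exp (- g * real i)) * X i j)"
  unfolding mmul_def expH_def by (intro ext, subst infsum_single_support) auto

lemma mmul_expH_right:
  "mmul X (expH g) = (\<lambda>i j. X i j * complex_of_real (exp (- g * real j)))"
  unfolding mmul_def expH_def by (intro ext, subst infsum_single_support) auto

lemma mmul_diag_mat_right: "mmul X (diag_mat d) = (\<lambda>i j. X i j * complex_of_real (d j))"
  unfolding mmul_def diag_mat_def by (intro ext, subst infsum_single_support) auto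

lemma mmul_diag_mat: "mmul (diag_mat d) (diag_mat e) = diag_mat (\<lambda>i. d i * e i)"
  unfolding mmul_diag_mat_right by (auto simp: diag_mat_def fun_eq_iff)

lemma adj_diag_mat: "adj (diag_mat d) = diag_mat d"
  unfolding adj_def diag_mat_def by (auto simp: fun_eq_iff)

lemma diff_diag_mat: "diag_mat d - diag_mat e = diag_mat (\<lambda>i. d i - e i)"
  unfolding diag_mat_def by (auto simp: fun_eq_iff)

lemma sqrt_mult_self_complex:
  "complex_of_real (sqrt (real n)) * complex_of_real (sqrt (real n)) = of_nat n"
  by (simp flip: of_real_mult)

subsection \<open>The ideal and the noisy channels on diagonal states\<close>

lemma ideal_minus_diag_mat:
  "ideal_minus (diag_mat r) = normalize (diag_mat (\<lambda>i. real (Suc i) * r (Suc i)))"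
  unfolding ideal_minus_def mmul_cre_right mmul_diag_mat_right ann_def
  by (intro arg_cong[where f = normalize])
    (auto simp: diag_mat_def fun_eq_iff sqrt_mult_self_complex mult_ac simp del: of_nat_Suc)

lemma ideal_plus_diag_mat:
  "ideal_plus (diag_mat r) = normalize (diag_mat (\<lambda>i. real i * r (i - 1)))"
  unfolding ideal_plus_def mmul_ann_right mmul_diag_mat_right cre_def
  by (intro arg_cong[where f = normalize])
    (auto simp: diag_mat_def fun_eq_iff sqrt_mult_self_complex mult_ac)

lemma Nminus_diag_mat:
  "Nminus g (diag_mat r)
     = diag_mat (\<lambda>i. (1 - exp (- 2 * g)) * exp (- 2 * g * real i) * (real (Suc i) * r (Suc i)))"
proof -
  have damping: "(exp (2 * g) - 1) * (exp (- g * real (Suc i)) * exp (- g * real (Suc i)))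
      = (1 - exp (- 2 * g)) * exp (- 2 * g * real i)" for i
    by (simp add: algebra_simps flip: exp_add)
  have "Nminus g (diag_mat r) = diag_mat (\<lambda>i. (exp (2 * g) - 1)
      * (exp (- g * real (Suc i)) * exp (- g * real (Suc i))) * (real (Suc i) * r (Suc i)))"
    unfolding Nminus_def mmul_cre_right mmul_expH_right mmul_diag_mat_right mmul_ann_left
    by (auto simp: diag_mat_def fun_eq_iff mscale_def expH_def ann_def cre_def
        sqrt_mult_self_complex mult_ac simp del: of_nat_Suc)
  then show ?thesis by (simp only: damping)
qed

lemma Nplus_diag_mat:
  "Nplus g (diag_mat r)
     = diag_mat (\<lambda>i. (exp (2 * g) - 1) * exp (- 2 * g * real i) * (real i * r (i - 1)))"
proof -
  have damping: "exp (- g * real i) * exp (- g * real i) = exp (- 2 * g * real i)" for i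
    by (simp flip: exp_add)
  have "Nplus g (diag_mat r) = diag_mat (\<lambda>i. (exp (2 * g) - 1)
      * (exp (- g * real i) * exp (- g * real i)) * (real i * r (i - 1)))"
    unfolding Nplus_def mmul_ann_right mmul_expH_right mmul_diag_mat_right mmul_expH_left
      mmul_cre_left
    by (auto simp: diag_mat_def fun_eq_iff mscale_def expH_def ann_def cre_def
        sqrt_mult_self_complex mult_ac)
  then show ?thesis by (simp only: damping)
qed

lemma qform_superset:
  assumes "finite F" "supp_vec x \<subseteq> F"
  shows "qform S x = (\<Sum>i\<in>F. \<Sum>j\<in>F. cnj (x i) * S i j * x j)"
proof -
  have fin: "finite (supp_vec x)" using assms finite_subset by blast
  have z: "\<And>i. i \<notin> supp_vec x \<Longrightarrow> x i = 0" by (simp add: supp_vec_def)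
  have "qform S x = (\<Sum>i\<in>F. \<Sum>j\<in>supp_vec x. cnj (x i) * S i j * x j)"
    unfolding qform_def by (rule sum.mono_neutral_left[OF assms(1) assms(2)]) (auto simp: z)
  also have "\<dots> = (\<Sum>i\<in>F. \<Sum>j\<in>F. cnj (x i) * S i j * x j)"
    by (rule sum.cong[OF refl], rule sum.mono_neutral_left[OF assms(1) assms(2)]) (auto simp: z)
  finally show ?thesis .
qed

lemma cnj_mult_of_real_mult: "cnj z * complex_of_real d * z = complex_of_real (d * (cmod z)\<^sup>2)"
proof -
  have "cnj z * complex_of_real d * z = complex_of_real d * (z * cnj z)" by (simp add: mult_ac)
  also have "\<dots> = complex_of_real (d * (cmod z)\<^sup>2)"
    by (simp only: complex_norm_square[symmetric] of_real_mult)
  finally show ?thesis .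
qed

lemma sum_diag_mat_mult:
  assumes "finite A"
  shows "(\<Sum>j\<in>A. diag_mat d i j * x j) = (if i \<in> A then complex_of_real (d i) * x i else 0)"
  using assms by (simp add: diag_mat_def if_distrib[of "\<lambda>t. t * _"] sum.delta cong: if_cong)

lemma qform_diag_mat:
  assumes "finite (supp_vec x)"
  shows "qform (diag_mat d) x = (\<Sum>i\<in>supp_vec x. complex_of_real (d i * (cmod (x i))\<^sup>2))"
  unfolding qform_def
proof (rule sum.cong[OF refl])
  fix i assume "i \<in> supp_vec x"
  have "(\<Sum>j\<in>supp_vec x. cnj (x i) * diag_mat d i j * x j)
      = cnj (x i) * (\<Sum>j\<in>supp_vec x. diag_mat d i j * x j)"
    by (simp add: sum_distrib_left mult.assoc)
  also have "\<dots> = cnj (x i) * complex_of_real (d i) * x i"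
    using sum_diag_mat_mult[OF assms, of d i x] \<open>i \<in> supp_vec x\<close> by (simp add: mult.assoc)
  finally show "(\<Sum>j\<in>supp_vec x. cnj (x i) * diag_mat d i j * x j)
      = complex_of_real (d i * (cmod (x i))\<^sup>2)"
    by (simp only: cnj_mult_of_real_mult)
qed

lemma psd_diag_mat:
  assumes "\<And>i. 0 \<le> d i"
  shows "psd (diag_mat d)"
  unfolding psd_def
proof (intro conjI allI impI)
  fix i j show "diag_mat d j i = cnj (diag_mat d i j)" by (simp add: diag_mat_def)
next
  fix x :: "nat \<Rightarrow> complex" assume "finite (supp_vec x)"
  then have "Re (qform (diag_mat d) x) = (\<Sum>i\<in>supp_vec x. d i * (cmod (x i))\<^sup>2)"
    by (simp add: qform_diag_mat Re_sum)
  also have "\<dots> \<ge> 0" by (intro sum_nonneg mult_nonneg_nonneg assms) auto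
  finally show "0 \<le> Re (qform (diag_mat d) x)" .
qed

lemma bounded_diag_mat:
  assumes "\<And>i. \<bar>d i\<bar> \<le> c"
  shows "bounded_mat (diag_mat d)"
  unfolding bounded_mat_def
proof (intro exI[of _ "c\<^sup>2"] allI impI)
  fix x :: "nat \<Rightarrow> complex" and I :: "nat set"
  assume x: "finite (supp_vec x)" and I: "finite I"
  have "(\<Sum>i\<in>I. (cmod (\<Sum>j\<in>supp_vec x. diag_mat d i j * x j))\<^sup>2)
      = (\<Sum>i\<in>I \<inter> supp_vec x. (d i)\<^sup>2 * (cmod (x i))\<^sup>2)"
    using I by (simp add: sum_diag_mat_mult[OF x] sum.inter_restrict if_distrib[of "\<lambda>t. (cmod t)\<^sup>2"])
      (auto intro: sum.cong simp: norm_mult power_mult_distrib)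
  also have "\<dots> \<le> (\<Sum>i\<in>supp_vec x. c\<^sup>2 * (cmod (x i))\<^sup>2)"
  proof (rule sum_mono2[OF x, THEN order_trans], (auto)[2], rule sum_mono)
    fix i
    have "(d i)\<^sup>2 \<le> c\<^sup>2" using assms[of i] by (simp add: abs_le_square_iff[symmetric])
    then show "(d i)\<^sup>2 * (cmod (x i))\<^sup>2 \<le> c\<^sup>2 * (cmod (x i))\<^sup>2" by (simp add: mult_right_mono)
  qed
  finally show "(\<Sum>i\<in>I. (cmod (\<Sum>j\<in>supp_vec x. diag_mat d i j * x j))\<^sup>2)
      \<le> c\<^sup>2 * (\<Sum>j\<in>supp_vec x. (cmod (x j))\<^sup>2)"
    by (simp add: sum_distrib_left)
qed

subsection \<open>Uniqueness of bounded positive square roots\<close>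

lemma psd_hermitian: "psd S \<Longrightarrow> S j i = cnj (S i j)"
  unfolding psd_def by blast

lemma psd_diagonal_real_nonneg:
  assumes "psd S"
  shows "S i i = complex_of_real (Re (S i i))" and "0 \<le> Re (S i i)"
proof -
  have "Im (S i i) = 0"
    using arg_cong[OF psd_hermitian[OF assms, of i i], of Im] by simp
  then show "S i i = complex_of_real (Re (S i i))" by (simp add: complex_eq_iff)
  define x where "x = (\<lambda>j. if j = i then (1::complex) else 0)"
  have sx: "supp_vec x = {i}" by (auto simp: x_def supp_vec_def)
  then have "qform S x = S i i" by (simp add: qform_def x_def)
  then show "0 \<le> Re (S i i)" using assms sx unfolding psd_def by (metis finite.emptyI finite_insert)
qed

lemma psd_off_diagonal_eq_0:
  assumes S: "psd S" and pq: "p \<noteq> q" and diag: "S p p = 0" "S q q = 0"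
  shows "S p q = 0"
proof (rule ccontr)
  assume nz: "S p q \<noteq> 0"
  define x where "x = (\<lambda>j. if j = p then (1::complex) else if j = q then - cnj (S p q) else 0)"
  have sx: "supp_vec x \<subseteq> {p, q}" by (auto simp: x_def supp_vec_def)
  have "qform S x = (\<Sum>i\<in>{p,q}. \<Sum>j\<in>{p,q}. cnj (x i) * S i j * x j)"
    by (rule qform_superset[OF _ sx]) simp
  also have "\<dots> = - 2 * (S p q * cnj (S p q))"
    using pq diag psd_hermitian[OF S, of p q] by (simp add: x_def algebra_simps)
  also have "\<dots> = - 2 * complex_of_real ((cmod (S p q))\<^sup>2)" by (simp only: complex_norm_square)
  finally have "Re (qform S x) = - 2 * (cmod (S p q))\<^sup>2" by simp
  moreover have "(cmod (S p q))\<^sup>2 > 0" using nz by simp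
  moreover have "0 \<le> Re (qform S x)"
    using S sx finite_subset unfolding psd_def by (metis finite.emptyI finite_insert)
  ultimately show False by linarith
qed

lemma bounded_mat_column_summable:
  assumes "bounded_mat S"
  shows "(\<lambda>k. (cmod (S k i))\<^sup>2) summable_on UNIV"
proof -
  obtain C where C: "\<And>x I. finite (supp_vec x) \<Longrightarrow> finite I \<Longrightarrow>
      (\<Sum>i\<in>I. (cmod (\<Sum>j\<in>supp_vec x. S i j * x j))\<^sup>2)
        \<le> C * (\<Sum>j\<in>supp_vec x. (cmod (x j))\<^sup>2)"
    using assms unfolding bounded_mat_def by blast
  define x where "x = (\<lambda>j. if j = i then (1::complex) else 0)"
  have sx: "supp_vec x = {i}" by (auto simp: x_def supp_vec_def)
  have "(\<Sum>k\<in>F. (cmod (S k i))\<^sup>2) \<le> C" if "finite F" for F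
    using C[of x F] sx that by (simp add: x_def)
  then show ?thesis by (intro nonneg_bdd_above_summable_on bdd_aboveI) auto
qed

lemma psd_bounded_mat_row_summable:
  assumes S: "psd S" "bounded_mat S"
  shows "(\<lambda>k. (cmod (S i k))\<^sup>2) summable_on UNIV"
proof -
  have "cmod (S i k) = cmod (S k i)" for k
    by (metis complex_mod_cnj psd_hermitian[OF S(1)])
  then show ?thesis using bounded_mat_column_summable[OF S(2), of i] by simp
qed

lemma psd_bounded_mat_mmul_self_diagonal:
  assumes S: "psd S" "bounded_mat S"
  shows "Re (mmul S S i i) = (\<Sum>\<^sub>\<infinity>k. (cmod (S i k))\<^sup>2)"
proof -
  have entry: "S i k * S k i = complex_of_real ((cmod (S i k))\<^sup>2)" for k
    by (simp only: psd_hermitian[OF S(1), of k i] complex_norm_square)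
  have "(\<lambda>k. (cmod (S i k))\<^sup>2) summable_on UNIV"
    by (rule psd_bounded_mat_row_summable[OF S])
  then have "(\<lambda>k. S i k * S k i) summable_on UNIV"
    unfolding entry by (rule summable_on_of_real)
  then have "Re (\<Sum>\<^sub>\<infinity>k. S i k * S k i) = (\<Sum>\<^sub>\<infinity>k. Re (S i k * S k i))"
    by (rule infsum_Re[symmetric])
  then show ?thesis by (simp add: mmul_def entry)
qed

lemma psd_bounded_mat_row_eq_0:
  assumes S: "psd S" "bounded_mat S" and "mmul S S i i = 0"
  shows "S i k = 0" and "S k i = 0"
proof -
  have "(\<lambda>k. (cmod (S i k))\<^sup>2) summable_on UNIV"
    by (rule psd_bounded_mat_row_summable[OF S])
  then have "(cmod (S i k))\<^sup>2 \<le> (\<Sum>\<^sub>\<infinity>k. (cmod (S i k))\<^sup>2)"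
    using infsum_mono2[of "\<lambda>k. (cmod (S i k))\<^sup>2" "{k}" UNIV] by simp
  also have "\<dots> = 0"
    using psd_bounded_mat_mmul_self_diagonal[OF S, of i] assms(3) by simp
  finally show "S i k = 0" by simp
  then show "S k i = 0" using psd_hermitian[OF S(1), of i k] by simp
qed

lemma psd_sqrt_two_point_unique:
  assumes pq: "p \<noteq> q" and c: "c > 0" and S: "psd S" "bounded_mat S"
    and SS: "mmul S S = diag_mat (\<lambda>i. if i = p \<or> i = q then c\<^sup>2 else 0)"
  shows "S = diag_mat (\<lambda>i. if i = p \<or> i = q then c else 0)"
proof -
  have SS_entry: "mmul S S i j = (if i = j \<and> (i = p \<or> i = q) then complex_of_real (c\<^sup>2) else 0)"
    for i j using fun_cong[OF fun_cong[OF SS, of i], of j] by (simp add: diag_mat_def)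
  have outside: "S i k = 0" "S k i = 0" if "i \<noteq> p" "i \<noteq> q" for i k
    using psd_bounded_mat_row_eq_0[OF S, of i] SS_entry[of i i] that by auto
  have prod: "mmul S S i j = S i p * S p j + S i q * S q j" for i j
  proof -
    have "mmul S S i j = (\<Sum>k\<in>{p,q}. S i k * S k j)"
      unfolding mmul_def by (rule infsum_finite_support) (auto simp: outside)
    then show ?thesis using pq by simp
  qed
  note real_diag = psd_diagonal_real_nonneg[OF S(1)]
  have "(S p p + S q q) * S p q = 0"
    using prod[of p q] SS_entry[of p q] pq by (simp add: algebra_simps)
  moreover have "S p p + S q q \<noteq> 0 \<or> S p q = 0"
    using real_diag[of p] real_diag[of q] psd_off_diagonal_eq_0[OF S(1) pq]
    by (metis add_nonneg_eq_0_iff of_real_0 plus_complex.sel(1) zero_complex.sel(1))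
  ultimately have off: "S p q = 0" "S q p = 0"
    using psd_hermitian[OF S(1), of p q] by auto
  have on: "S i i = complex_of_real c" if "i = p \<or> i = q" for i
  proof -
    have "S i i * S i i = complex_of_real (c\<^sup>2)"
      using that prod[of i i] SS_entry[of i i] off pq by auto
    then have "complex_of_real ((Re (S i i))\<^sup>2) = complex_of_real (c\<^sup>2)"
      by (subst (asm) (1 2) real_diag(1)) (simp add: power2_eq_square)
    then have "(Re (S i i))\<^sup>2 = c\<^sup>2" by (simp only: of_real_eq_iff)
    then have "Re (S i i) = c" using real_diag(2)[of i] c by (simp add: power2_eq_iff_nonneg)
    then show ?thesis using real_diag(1)[of i] by simp
  qed
  show ?thesis
  proof (intro ext)
    fix i j
    show "S i j = diag_mat (\<lambda>i. if i = p \<or> i = q then c else 0) i j"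
      using on off outside[of i j] outside[of j i] pq by (auto simp: diag_mat_def)
  qed
qed

lemma mtrace_diag_mat:
  assumes "finite F" "\<And>k. k \<notin> F \<Longrightarrow> d k = 0"
  shows "mtrace (diag_mat d) = complex_of_real (sum d F)"
  unfolding mtrace_def diag_mat_def
  using infsum_finite_support[of F "\<lambda>n. complex_of_real (d n)"] assms by simp

lemma density_diag_mat:
  assumes "\<And>i. 0 \<le> r i" and "finite F" "\<And>k. k \<notin> F \<Longrightarrow> r k = 0" and "sum r F = 1"
  shows "density (diag_mat r)"
  unfolding density_def
proof (intro conjI)
  show "psd (diag_mat r)" by (rule psd_diag_mat) (use assms in auto)
  show "(\<lambda>n. diag_mat r n n) summable_on UNIV"
    by (rule summable_on_finite_support[of F]) (use assms in \<open>auto simp: diag_mat_def\<close>)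
  show "mtrace (diag_mat r) = 1" using mtrace_diag_mat[of F r] assms by simp
qed

lemma
  assumes "finite F" "\<And>k. k \<notin> F \<Longrightarrow> r k = 0"
  shows energy_finite_diag_mat: "energy_finite (diag_mat r)"
    and energy_diag_mat: "energy (diag_mat r) = (\<Sum>k\<in>F. real k * r k)"
  unfolding energy_finite_def energy_def
  using summable_on_finite_support[of F "\<lambda>k. real k * r k"]
    infsum_finite_support[of F "\<lambda>k. real k * r k"] assms
  by (simp_all add: diag_mat_def)

lemma normalize_two_point:
  assumes "p \<noteq> q"
  shows "normalize (diag_mat (two_point p q u v))
           = diag_mat (two_point p q (u / (u + v)) (v / (u + v)))"
proof -
  have "mtrace (diag_mat (two_point p q u v)) = complex_of_real (u + v)"
    using mtrace_diag_mat[of "{p, q}" "two_point p q u v"] assms by (simp add: two_point_def)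
  then show ?thesis
    unfolding normalize_def mscale_def by (auto simp: diag_mat_def two_point_def fun_eq_iff)
qed

lemma trace_norm_two_point_antisymmetric:
  assumes pq: "p \<noteq> q" and a: "a \<noteq> 0"
  shows "trace_norm (diag_mat (two_point p q a (- a))) = 2 * \<bar>a\<bar>"
proof -
  define A where "A = diag_mat (two_point p q a (- a))"
  define s where "s = (\<lambda>i. if i = p \<or> i = q then \<bar>a\<bar> else 0)"
  have AA: "mmul (adj A) A = diag_mat (\<lambda>i. if i = p \<or> i = q then \<bar>a\<bar>\<^sup>2 else 0)"
    unfolding A_def adj_diag_mat mmul_diag_mat
    by (auto simp: two_point_def power2_eq_square intro!: arg_cong[where f = diag_mat])
  have ss: "mmul (diag_mat s) (diag_mat s) = mmul (adj A) A"
    unfolding AA mmul_diag_mat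
    by (auto simp: s_def power2_eq_square intro!: arg_cong[where f = diag_mat])
  have "mabs A = diag_mat s"
    unfolding mabs_def
  proof (rule the_equality)
    show "bounded_mat (diag_mat s) \<and> psd (diag_mat s) \<and> mmul (diag_mat s) (diag_mat s) = mmul (adj A) A"
      using bounded_diag_mat[of s "\<bar>a\<bar>"] psd_diag_mat[of s] ss by (auto simp: s_def)
    show "S = diag_mat s" if "bounded_mat S \<and> psd S \<and> mmul S S = mmul (adj A) A" for S
      using that psd_sqrt_two_point_unique[OF pq, of "\<bar>a\<bar>" S] a unfolding AA s_def by auto
  qed
  then have "trace_norm A = (\<Sum>\<^sub>\<infinity>n. s n)"
    unfolding trace_norm_def by (simp add: diag_mat_def)
  also have "\<dots> = (\<Sum>n\<in>{p,q}. s n)" by (rule infsum_finite_support) (auto simp: s_def)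
  also have "\<dots> = 2 * \<bar>a\<bar>" using pq by (simp add: s_def)
  finally show ?thesis unfolding A_def .
qed

lemma trace_norm_damped_two_point:
  assumes pq: "p < q" and g: "g > 0" and w: "w > 0" and c: "c > 0"
  shows "trace_norm (normalize (diag_mat (two_point p q w w))
           - normalize (diag_mat (\<lambda>i. c * exp (- 2 * g * real i) * two_point p q w w i)))
         = tanh (g * real (q - p))"
proof -
  define u where "u = c * exp (- 2 * g * real p) * w"
  define e where "e = exp (- 2 * (g * real (q - p)))"
  define v where "v = u * e"
  have damped: "(\<lambda>i. c * exp (- 2 * g * real i) * two_point p q w w i) = two_point p q u v"
    using pq by (auto simp: two_point_def u_def v_def e_def of_nat_diff algebra_simps
        simp flip: exp_add)
  have u: "u > 0" using c w by (simp add: u_def)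
  have e: "0 < e" "e < 1" using pq g by (auto simp: e_def)
  define a where "a = 1 / 2 - u / (u + v)"
  have a: "a = - (1 - e) / (2 * (1 + e))" "1 / 2 - v / (u + v) = - a"
  proof -
    have "u + v = u * (1 + e)" by (simp add: v_def algebra_simps)
    then have "u / (u + v) = 1 / (1 + e)" "v / (u + v) = e / (1 + e)"
      using u by (simp_all add: v_def)
    then show "a = - (1 - e) / (2 * (1 + e))" "1 / 2 - v / (u + v) = - a"
      using e by (simp_all add: a_def field_simps)
  qed
  have "normalize (diag_mat (two_point p q w w)) - normalize (diag_mat (two_point p q u v))
      = diag_mat (two_point p q a (- a))"
    unfolding normalize_two_point[OF less_imp_neq[OF pq]] diff_diag_mat
    using w by (auto simp: two_point_def a(2) a_def intro!: arg_cong[where f = diag_mat])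
  moreover have "a \<noteq> 0" using e by (simp add: a(1))
  ultimately have "trace_norm (normalize (diag_mat (two_point p q w w))
      - normalize (diag_mat (two_point p q u v))) = 2 * \<bar>a\<bar>"
    using trace_norm_two_point_antisymmetric[OF less_imp_neq[OF pq]] by simp
  also have "2 * \<bar>a\<bar> = (1 - e) / (1 + e)"
    using e by (simp add: a(1) abs_divide) (simp add: field_simps)
  finally show ?thesis unfolding damped e_def tanh_real_altdef by simp
qed

subsection \<open>The extremal states\<close>

lemma Nminus_deviation_witness:
  assumes g: "g > 0" and q: "q \<ge> 1"
  obtains \<rho> where "density \<rho>" "energy_finite \<rho>" "energy \<rho> = 1"
    "trace_norm (ideal_minus \<rho> - normalize (Nminus g \<rho>)) = tanh (g * real q)"
proof -
  define r where "r = (\<lambda>k. if k = 0 then 1 / 2 - 1 / (2 * (real q + 1))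
                           else if k = 1 then 1 / 2
                           else if k = q + 1 then 1 / (2 * (real q + 1)) else 0)"
  have support: "r k = 0" if "k \<notin> {0, 1, q + 1}" for k
    using that by (simp add: r_def)
  have "1 / (2 * (real q + 1)) \<le> 1 / 2" by (simp add: field_simps)
  then have "density (diag_mat r)"
    by (intro density_diag_mat[where F = "{0, 1, q + 1}", OF _ _ support])
      (use q in \<open>auto simp: r_def\<close>)
  moreover have "energy_finite (diag_mat r)" "energy (diag_mat r) = 1"
    using energy_finite_diag_mat[where F = "{0, 1, q + 1}", OF _ support]
      energy_diag_mat[where F = "{0, 1, q + 1}", OF _ support] q
    by (auto simp: r_def field_simps)
  moreover have weights: "real (Suc i) * r (Suc i) = two_point 0 q (1 / 2) (1 / 2) i" for i
    using q by (auto simp: r_def two_point_def)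
  then have "trace_norm (ideal_minus (diag_mat r) - normalize (Nminus g (diag_mat r)))
      = tanh (g * real q)"
    unfolding ideal_minus_diag_mat Nminus_diag_mat weights
    using trace_norm_damped_two_point[of 0 q g "1 / 2" "1 - exp (- 2 * g)"] g q by simp
  ultimately show ?thesis using that by blast
qed

lemma Nplus_deviation_witness:
  assumes g: "g > 0" and q: "q \<ge> 1"
  obtains \<rho> where "density \<rho>" "energy_finite \<rho>" "0 < energy \<rho>" "energy \<rho> \<le> 1"
    "trace_norm (ideal_plus \<rho> - normalize (Nplus g \<rho>)) = tanh (g * real q)"
proof -
  define w where "w = (real q + 1) / (real q + 2)"
  define r where "r = (\<lambda>k. if k = 0 then w else if k = q then 1 / (real q + 2) else 0)"
  have support: "r k = 0" if "k \<notin> {0, q}" for k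
    using that by (simp add: r_def)
  have "density (diag_mat r)"
    by (rule density_diag_mat[where F = "{0, q}", OF _ _ support])
      (use q in \<open>auto simp: r_def w_def field_simps\<close>)
  moreover have "energy_finite (diag_mat r)"
    using energy_finite_diag_mat[where F = "{0, q}", OF _ support] by simp
  moreover have "energy (diag_mat r) = real q / (real q + 2)"
    using energy_diag_mat[where F = "{0, q}", OF _ support] q by (auto simp: r_def)
  then have "0 < energy (diag_mat r)" "energy (diag_mat r) \<le> 1"
    using q by simp_all
  moreover have weights: "real i * r (i - 1) = two_point 1 (q + 1) w w i" for i
    using q by (auto simp: r_def w_def two_point_def field_simps)
  then have "trace_norm (ideal_plus (diag_mat r) - normalize (Nplus g (diag_mat r)))
      = tanh (g * real q)"
    unfolding ideal_plus_diag_mat Nplus_diag_mat weights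
    using trace_norm_damped_two_point[of 1 "q + 1" g w "exp (2 * g) - 1"] g q
    by (simp add: w_def)
  ultimately show ?thesis using that by blast
qed

lemma ex_nat_tanh_mult_ge:
  fixes g s :: real
  assumes "g > 0" and "s < 1"
  obtains q :: nat where "q \<ge> 1" and "s \<le> tanh (g * real q)"
proof -
  have "filterlim (\<lambda>q::nat. g * real q) at_top sequentially"
    using assms(1) by (intro filterlim_tendsto_pos_mult_at_top filterlim_real_sequentially) auto
  then have "((\<lambda>q. tanh (g * real q)) \<longlongrightarrow> 1) sequentially"
    by (rule filterlim_compose[OF tanh_real_at_top])
  then have "\<forall>\<^sub>F q in sequentially. s < tanh (g * real q)"
    using assms(2) by (rule order_tendstoD(1))
  then obtain N where N: "\<forall>q\<ge>N. s < tanh (g * real q)" by (auto simp: eventually_sequentially)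
  have "s < tanh (g * real (Suc N))" using N[rule_format, of "Suc N"] by linarith
  then show ?thesis using that[of "Suc N"] by simp
qed

theorem proposition2:
  shows "(\<forall>g::real. \<forall>E::real. g > 0 \<longrightarrow> E > 0 \<longrightarrow>
            (\<exists>\<rho>. density \<rho> \<and> energy_finite \<rho> \<and> 0 < energy \<rho> \<and> energy \<rho> \<le> E + 1 \<and>
                 trace_norm (ideal_minus \<rho> - normalize (Nminus g \<rho>)) \<ge> sqrt (E / (E + 1))))
       \<and> (\<forall>g::real. \<forall>E::real. g > 0 \<longrightarrow> E > 0 \<longrightarrow>
            (\<exists>\<rho>. density \<rho> \<and> energy_finite \<rho> \<and> 0 < energy \<rho> \<and> energy \<rho> \<le> E + 1 \<and>
                 trace_norm (ideal_plus \<rho> - normalize (Nplus g \<rho>)) \<ge> sqrt (E / (E + 1))))"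
proof (intro conjI allI impI)
  fix g E :: real assume g: "g > 0" and E: "E > 0"
  then obtain q where q: "q \<ge> 1" "sqrt (E / (E + 1)) \<le> tanh (g * real q)"
    using ex_nat_tanh_mult_ge[of g "sqrt (E / (E + 1))"] by auto
  obtain \<rho> where "density \<rho>" "energy_finite \<rho>" "energy \<rho> = 1"
      "trace_norm (ideal_minus \<rho> - normalize (Nminus g \<rho>)) = tanh (g * real q)"
    using Nminus_deviation_witness[OF g q(1)] .
  then show "\<exists>\<rho>. density \<rho> \<and> energy_finite \<rho> \<and> 0 < energy \<rho> \<and> energy \<rho> \<le> E + 1 \<and>
      trace_norm (ideal_minus \<rho> - normalize (Nminus g \<rho>)) \<ge> sqrt (E / (E + 1))"
    using E q(2) by auto
next
  fix g E :: real assume g: "g > 0" and E: "E > 0"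
  then obtain q where q: "q \<ge> 1" "sqrt (E / (E + 1)) \<le> tanh (g * real q)"
    using ex_nat_tanh_mult_ge[of g "sqrt (E / (E + 1))"] by auto
  obtain \<rho> where "density \<rho>" "energy_finite \<rho>" "0 < energy \<rho>" "energy \<rho> \<le> 1"
      "trace_norm (ideal_plus \<rho> - normalize (Nplus g \<rho>)) = tanh (g * real q)"
    using Nplus_deviation_witness[OF g q(1)] .
  then show "\<exists>\<rho>. density \<rho> \<and> energy_finite \<rho> \<and> 0 < energy \<rho> \<and> energy \<rho> \<le> E + 1 \<and>
      trace_norm (ideal_plus \<rho> - normalize (Nplus g \<rho>)) \<ge> sqrt (E / (E + 1))"
    using E q(2) by auto
qed

end
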